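(* Let $R$ be a ring with unity and involution $*$, and let $a\in R$. The following statements are equivalent. (1) $a$ is left dual core invertible. (2) $a^2$ is strongly left $(a^*,a)$-invertible. (3) $a^2$ is strongly left $(a^*,1)$-invertible. (4) $a$ is strongly left $(a^*,a)$-invertible.
   Context: $a$ is left dual core invertible if there exists $x\in R$ with $axa=a$, $(xa)^*=xa$ and $x^2a=x$. For $u,b,c\in R$, $u$ is strongly left $(b,c)$-invertible if $b\in Rcub$ and $cub$ is regular (there exists $z$ with $cub\,z\,cub=cub$). *)

theory Defs
  imports Main
begin

definition ring_involution :: "('a::ring_1 \<Rightarrow> 'a) \<Rightarrow> bool" where
  "ring_involution star \<longleftrightarrow>
     (\<forall>x y. star (x + y) = star x + star y) \<and>
     (\<forall>x y. star (x * y) = star y * star x) \<and>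
     (\<forall>x. star (star x) = x)"

definition left_dual_core_invertible :: "('a::ring_1 \<Rightarrow> 'a) \<Rightarrow> 'a \<Rightarrow> bool" where
  "left_dual_core_invertible star a \<longleftrightarrow>
     (\<exists>x. a * x * a = a \<and> star (x * a) = x * a \<and> x ^ 2 * a = x)"

definition regular :: "'a::ring_1 \<Rightarrow> bool" where
  "regular a \<longleftrightarrow> (\<exists>z. a * z * a = a)"

definition strongly_left_bc_invertible :: "'a::ring_1 \<Rightarrow> 'a \<Rightarrow> 'a \<Rightarrow> bool" where
  "strongly_left_bc_invertible u b c \<longleftrightarrow>
     (\<exists>r. b = r * (c * u * b)) \<and> regular (c * u * b)"

end

theory Submission
  imports Defs
begin

text \<open>If x is a left dual core inverse of a, then x^k a^k = x a and a* = x a a*, so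
  a* = x^k a^k a* lies in R a^k a*, and x* x^k is an inner inverse of a^k a*.
  Conversely, let z be an inner inverse of p = a^k a* with a* in R p, and put w = a* z a^k.
  Then w a* = a*, hence w w* = w*, which forces w to be Hermitian, and applying the
  involution to w a* = a* gives a w = a. For k \<ge> 2 the element x = a* z a^(k-1)
  satisfies x a = w and is a left dual core inverse of a. The four conditions of the
  theorem are instances of this with k = 2 and k = 3.\<close>

lemma ring_involution_mult [simp]: "ring_involution star \<Longrightarrow> star (x * y) = star y * star x"
  and ring_involution_involutive [simp]: "ring_involution star \<Longrightarrow> star (star x) = x"
  unfolding ring_involution_def by auto

lemma ring_involution_hermitian:
  assumes "ring_involution star" and "w * star w = star w"
  shows "star w = w"
proof -
  have "w = star (w * star w)"
    using assms by simp
  also have "\<dots> = w * star w"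
    using assms(1) by simp
  finally show ?thesis
    using assms(2) by simp
qed

lemma strongly_left_bc_invertible_iff_one:
  "strongly_left_bc_invertible u b c \<longleftrightarrow> strongly_left_bc_invertible (c * u) b 1"
  unfolding strongly_left_bc_invertible_def by (simp add: mult.assoc)

lemma power_mult_power_cancel:
  fixes x a :: "'a::monoid_mult"
  assumes "x ^ 2 * a = x"
  shows "x ^ Suc k * a ^ Suc k = x * a"
proof (induction k)
  case (Suc k)
  have "x ^ Suc (Suc k) * a ^ Suc (Suc k) = x ^ k * x ^ 2 * (a * a ^ Suc k)"
    by (metis add_2_eq_Suc' power_add power_Suc)
  also have "\<dots> = x ^ k * (x ^ 2 * a) * a ^ Suc k"
    by (simp only: mult.assoc)
  also have "\<dots> = x ^ Suc k * a ^ Suc k"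
    by (simp only: assms power_Suc2)
  finally show ?case
    using Suc.IH by simp
qed simp

lemma left_dual_core_invertible_imp_strongly_left_invertible:
  assumes inv: "ring_involution star" and "left_dual_core_invertible star a" and "0 < k"
  shows "strongly_left_bc_invertible (a ^ k) (star a) 1"
proof -
  obtain x where axa: "a * x * a = a" and herm: "star (x * a) = x * a" and x2a: "x ^ 2 * a = x"
    using assms(2) unfolding left_dual_core_invertible_def by blast
  have pow: "x ^ k * a ^ k = x * a"
    using power_mult_power_cancel[OF x2a, of "k - 1"] \<open>0 < k\<close> by simp
  have absorb: "x * a * star a = star a"
  proof -
    have "star a = star (a * (x * a))"
      using axa by (simp add: mult.assoc)
    then show ?thesis
      using inv herm by simp
  qed
  have "x ^ k * (1 * a ^ k * star a) = x * a * star a"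
    using pow by (simp add: mult.assoc [symmetric])
  then have "star a = x ^ k * (1 * a ^ k * star a)"
    using absorb by simp
  moreover have "a ^ k * star a * (star x * x ^ k) * (a ^ k * star a) = a ^ k * star a"
  proof -
    have "a ^ k * star a * (star x * x ^ k) * (a ^ k * star a)
          = a ^ k * (star (x * a) * (x ^ k * a ^ k) * star a)"
      using inv by (simp add: mult.assoc)
    also have "\<dots> = a ^ k * (x * (a * x * a) * star a)"
      using herm pow by (simp add: mult.assoc)
    also have "\<dots> = a ^ k * star a"
      using axa absorb by (simp add: mult.assoc)
    finally show ?thesis .
  qed
  ultimately show ?thesis
    unfolding strongly_left_bc_invertible_def regular_def by auto
qed

lemma strongly_left_invertible_imp_left_dual_core_invertible:
  assumes inv: "ring_involution star" and "strongly_left_bc_invertible (a ^ k) (star a) 1"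
    and "2 \<le> k"
  shows "left_dual_core_invertible star a"
proof -
  define p where "p = a ^ k * star a"
  obtain r z where r: "star a = r * p" and z: "p * z * p = p"
    using assms(2) unfolding strongly_left_bc_invertible_def regular_def p_def by auto
  obtain j where k: "k = Suc (Suc j)"
    using \<open>2 \<le> k\<close> by (metis add_2_eq_Suc le_Suc_ex)
  define x where "x = star a * z * a ^ Suc j"
  define w where "w = star a * z * a ^ k"
  have xa: "x * a = w"
    unfolding x_def w_def k by (simp only: power_Suc2 mult.assoc)
  have wa: "w * star a = star a"
  proof -
    have "w * star a = star a * z * p"
      unfolding w_def p_def by (simp add: mult.assoc)
    also have "\<dots> = r * (p * z * p)"
      by (subst r) (simp add: mult.assoc)
    finally show ?thesis
      using r z by simp
  qed
  have "star w = star a * (star (a ^ Suc j) * star z * a)"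
    unfolding w_def k power_Suc2 [of a "Suc j"] using inv by (simp add: mult.assoc)
  then have "w * star w = star w"
    using wa by (simp add: mult.assoc [symmetric])
  then have herm: "star w = w"
    using ring_involution_hermitian[OF inv] by blast
  have aw: "a * w = a"
  proof -
    have "a = star (w * star a)"
      using inv wa by simp
    then show ?thesis
      using inv herm by simp
  qed
  have "x ^ 2 * a = x"
  proof -
    have "x ^ 2 * a = x * w"
      using xa by (simp add: power2_eq_square mult.assoc)
    also have "\<dots> = star a * z * a ^ j * (a * w)"
      unfolding x_def by (simp only: power_Suc2 mult.assoc)
    finally show ?thesis
      unfolding x_def using aw by (simp only: power_Suc2 mult.assoc)
  qed
  moreover have "a * x * a = a"
    using xa aw by (simp add: mult.assoc)
  moreover have "star (x * a) = x * a"
    using xa herm by simp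
  ultimately show ?thesis
    unfolding left_dual_core_invertible_def by blast
qed

lemma left_dual_core_invertible_iff_strongly_left_invertible:
  assumes "ring_involution star" and "2 \<le> k"
  shows "left_dual_core_invertible star a \<longleftrightarrow> strongly_left_bc_invertible (a ^ k) (star a) 1"
  using assms left_dual_core_invertible_imp_strongly_left_invertible
    strongly_left_invertible_imp_left_dual_core_invertible by fastforce

theorem corollary3p13:
  fixes star :: "'a::ring_1 \<Rightarrow> 'a" and a :: 'a
  assumes "ring_involution star"
  shows "(left_dual_core_invertible star a \<longleftrightarrow> strongly_left_bc_invertible (a ^ 2) (star a) a)
       \<and> (left_dual_core_invertible star a \<longleftrightarrow> strongly_left_bc_invertible (a ^ 2) (star a) 1)
       \<and> (left_dual_core_invertible star a \<longleftrightarrow> strongly_left_bc_invertible a (star a) a)"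
proof -
  have "strongly_left_bc_invertible (a ^ 2) (star a) a \<longleftrightarrow>
        strongly_left_bc_invertible (a ^ 3) (star a) 1"
    using strongly_left_bc_invertible_iff_one by (metis power_Suc numeral_2_eq_2 numeral_3_eq_3)
  moreover have "strongly_left_bc_invertible a (star a) a \<longleftrightarrow>
                 strongly_left_bc_invertible (a ^ 2) (star a) 1"
    using strongly_left_bc_invertible_iff_one by (metis power2_eq_square)
  ultimately show ?thesis
    using left_dual_core_invertible_iff_strongly_left_invertible[OF assms] by simp
qed

end
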